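(* (Soundness of $\mathcal{T}_{\mathrm{EFO}}$.) Every branch that is refutable in the tableau calculus $\mathcal{T}_{\mathrm{EFO}}$ is unsatisfiable.
   Context: Types: a countable set of base types including a distinguished $o$; other base types are sorts ($\alpha$). Types: base types and $\sigma\tau$ (functions from $\sigma$ to $\tau$; $\sigma\tau\mu=\sigma(\tau\mu)$). Countably many names with unique types, infinitely many per type. Terms: names; $st:\mu$ for $s:\tau\mu,t:\tau$; $\lambda x.t:\sigma\tau$ for a name $x:\sigma$, $t:\tau$. Logical constants: $\neg:oo$, $\to:ooo$, $=_\sigma:\sigma\sigma o$ for every type $\sigma$, and $\forall_\alpha:(\alpha o)o$ for every sort $\alpha$; all other names are variables. Formulas: terms of type $o$; $s=_\sigma t$ is $(=_\sigma s)t$, $s\neq_\sigma t$ is $\neg(s=_\sigma t)$, $s\to t$ is $(\to s)t$. A term is EFO if the only logical constants occurring in it are $\neg$, $\to$, $=_\alpha$ and $\forall_\alpha$ ($\alpha$ sorts); $\mathrm{EFO}_\sigma$ is the set of EFO terms of type $\sigma$. A formula is quasi-EFO if it is EFO or of the form $s\neq_\sigma t$ with $s,t$ EFO and $\sigma$ any type. Semantics: a frame $\mathcal{D}$ maps types to nonempty sets with $\mathcal{D}(\sigma\tau)\subseteq(\mathcal{D}\sigma\to\mathcal{D}\tau)$. An assignment $\mathcal{I}$ into $\mathcal{D}$ extends $\mathcal{D}$ and maps names $x:\sigma$ into $\mathcal{D}\sigma$; $\mathcal{I}^x_a$ is the update. Partial evaluation: $\hat{\mathcal{I}}x=\mathcal{I}x$;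 $\hat{\mathcal{I}}(st)=(\hat{\mathcal{I}}s)(\hat{\mathcal{I}}t)$ when defined; $\hat{\mathcal{I}}(\lambda x.s)=f$ if $\lambda x.s:\sigma\tau$, $f\in\mathcal{D}(\sigma\tau)$ and $\widehat{\mathcal{I}^x_a}s=fa$ for all $a\in\mathcal{D}\sigma$. An interpretation is an assignment with total evaluation. It is logical if $\mathcal{I}o=\{0,1\}$, $\mathcal{I}(\neg)$ is negation, $\mathcal{I}(\to)$ is implication, $\mathcal{I}(=_\sigma)$ is identity on $\mathcal{I}\sigma$, and $\mathcal{I}(\forall_\alpha)f=1$ iff $f$ is the constant function with value $1$. A set of formulas is satisfiable if some logical interpretation evaluates each of them to $1$. Normalization: fixed type-preserving total $[\cdot]$; $s$ normal iff $[s]=s$; (N1) $[[s]]=[s]$; (N2) $[[s]t]=[st]$; (N3) $[ys_1\dots s_n]=y[s_1]\dots[s_n]$ for a name $y$, $n\ge0$, $ys_1\dots s_n$ of base type; (N4) $\hat{\mathcal{I}}[s]=\hat{\mathcal{I}}s$ for every interpretation. Calculus $\mathcal{T}_{\mathrm{EFO}}$: an EFO branch is a set of normal quasi-EFO formulas. A rule instance $A/A_1\dots A_n$ has $A$ a finite EFO branch containing the premises, $A_i=A\cup$(formulas of the $i$-th alternative). A term $u$ is $\alpha$-discriminating in $A$ if $u\neq_\alpha t\in A$ or $t\neq_\alpha u\in A$ for some $t$. Rules ($x$ a variable): $\neg\neg s$ / $s$; $s\neq_ot$ / $\{s,\neg t\}\mid\{\neg s,t\}$; $s\to t$ / $\neg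 s\mid t$; $\neg(s\to t)$ / $\{s,\neg t\}$; (Mat) $xs_1\dots s_n,\neg xt_1\dots t_n$ / $s_1\neq t_1\mid\dots\mid s_n\neq t_n$ ($n\ge0$); (Dec) $xs_1\dots s_n\neq_\alpha xt_1\dots t_n$ / $s_1\neq t_1\mid\dots\mid s_n\neq t_n$ ($n\ge0$); (FE) $s\neq_{\sigma\tau}t$ / $[sx]\neq[tx]$ with $x:\sigma$ not free in $A$; (Con) $s=_\alpha t,u\neq_\alpha v$ / $\{s\neq u,t\neq u\}\mid\{s\neq v,t\neq v\}$; (All) $\forall_\alpha s$ / $[su]$ for normal $u\in\mathrm{EFO}_\alpha$; (AllN) $\neg\forall_\alpha s$ / $\neg[sx]$ with $x:\alpha$ not free in $A$. Restrictions: FE on $s\neq t$ only if no variable $x$ has $[sx]\neq[tx]\in A$; AllN on $\neg\forall_\alpha s$ only if no variable $x:\alpha$ has $\neg[sx]\in A$; All on $\forall_\alpha s\in A$: if there are $\alpha$-discriminating terms in $A$, only with those; if $[su]\notin A$ for all normal $u\in\mathrm{Wff}_\alpha$, there are no $\alpha$-discriminating terms in $A$ and some variable of type $\alpha$ occurs free in $A$, only with a variable $x:\alpha$ occurring free in $A$; if $[su]\notin A$ for all normal $u\in\mathrm{Wff}_\alpha$, there are no $\alpha$-discriminating terms and no variable of type $\alpha$ occurs free in $A$, only with a variable $x:\alpha$. Refutable branches: least set such that if $A/A_1\dots A_n$ is an admitted instance and all $A_i$ are refutable then $A$ is refutable. *)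

theory Defs
  imports Main
begin

text \<open>Base types are Base n; the distinguished type o is Base 0, the sorts are Base (Suc n).\<close>
datatype ty = Base nat | Fn ty ty

abbreviation tyo :: ty where "tyo \<equiv> Base 0"

definition is_sort :: "ty \<Rightarrow> bool" where
  "is_sort \<sigma> \<longleftrightarrow> (\<exists>n. \<sigma> = Base (Suc n))"

datatype name = Var nat ty | NegC | ImpC | EqC ty | AllC nat

fun nty :: "name \<Rightarrow> ty" where
  "nty (Var n \<sigma>) = \<sigma>"
| "nty NegC = Fn tyo tyo"
| "nty ImpC = Fn tyo (Fn tyo tyo)"
| "nty (EqC \<sigma>) = Fn \<sigma> (Fn \<sigma> tyo)"
| "nty (AllC n) = Fn (Fn (Base (Suc n)) tyo) tyo"

fun is_var :: "name \<Rightarrow> bool" where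
  "is_var (Var _ _) = True"
| "is_var _ = False"

datatype tm = Nm name | App tm tm | Lam name tm

fun typeof :: "tm \<Rightarrow> ty option" where
  "typeof (Nm x) = Some (nty x)"
| "typeof (App s t) = (case typeof s of
      Some (Fn \<sigma> \<tau>) \<Rightarrow> (if typeof t = Some \<sigma> then Some \<tau> else None)
    | _ \<Rightarrow> None)"
| "typeof (Lam x s) = map_option (Fn (nty x)) (typeof s)"

definition is_term :: "tm \<Rightarrow> bool" where
  "is_term t \<longleftrightarrow> typeof t \<noteq> None"

definition tyof :: "tm \<Rightarrow> ty" where
  "tyof t = the (typeof t)"

fun names :: "tm \<Rightarrow> name set" where
  "names (Nm x) = {x}"
| "names (App s t) = names s \<union> names t"
| "names (Lam x s) = insert x (names s)"

fun free :: "tm \<Rightarrow> name set" where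
  "free (Nm x) = {x}"
| "free (App s t) = free s \<union> free t"
| "free (Lam x s) = free s - {x}"

definition free_set :: "tm set \<Rightarrow> name set" where
  "free_set A = (\<Union>s\<in>A. free s)"

definition apps :: "tm \<Rightarrow> tm list \<Rightarrow> tm" where
  "apps h ss = foldl App h ss"

definition neg :: "tm \<Rightarrow> tm" where "neg s = App (Nm NegC) s"
definition imp :: "tm \<Rightarrow> tm \<Rightarrow> tm" where "imp s t = App (App (Nm ImpC) s) t"
definition eq :: "ty \<Rightarrow> tm \<Rightarrow> tm \<Rightarrow> tm" where "eq \<sigma> s t = App (App (Nm (EqC \<sigma>)) s) t"
definition neq :: "ty \<Rightarrow> tm \<Rightarrow> tm \<Rightarrow> tm" where "neq \<sigma> s t = neg (eq \<sigma> s t)"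
definition all :: "nat \<Rightarrow> tm \<Rightarrow> tm" where "all n s = App (Nm (AllC n)) s"

text \<open>Elements of D (Fn sigma tau) are (extensionally, via ap) functions from
  D sigma to D tau, i.e. D(sigma tau) is a subset of D sigma \<rightarrow> D tau.\<close>
definition frame :: "(ty \<Rightarrow> 'u set) \<Rightarrow> ('u \<Rightarrow> 'u \<Rightarrow> 'u) \<Rightarrow> bool" where
  "frame D ap \<longleftrightarrow>
     (\<forall>\<sigma>. D \<sigma> \<noteq> {}) \<and>
     (\<forall>\<sigma> \<tau>. \<forall>f\<in>D (Fn \<sigma> \<tau>). \<forall>a\<in>D \<sigma>. ap f a \<in> D \<tau>) \<and>
     (\<forall>\<sigma> \<tau>. \<forall>f\<in>D (Fn \<sigma> \<tau>). \<forall>g\<in>D (Fn \<sigma> \<tau>).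
         (\<forall>a\<in>D \<sigma>. ap f a = ap g a) \<longrightarrow> f = g)"

definition assignment :: "(ty \<Rightarrow> 'u set) \<Rightarrow> ('u \<Rightarrow> 'u \<Rightarrow> 'u) \<Rightarrow> (name \<Rightarrow> 'u) \<Rightarrow> bool" where
  "assignment D ap I \<longleftrightarrow> frame D ap \<and> (\<forall>x. I x \<in> D (nty x))"

fun eval :: "(ty \<Rightarrow> 'u set) \<Rightarrow> ('u \<Rightarrow> 'u \<Rightarrow> 'u) \<Rightarrow> (name \<Rightarrow> 'u) \<Rightarrow> tm \<Rightarrow> 'u option" where
  "eval D ap I (Nm x) = Some (I x)"
| "eval D ap I (App s t) = (case (eval D ap I s, eval D ap I t) of
      (Some f, Some a) \<Rightarrow> Some (ap f a)
    | _ \<Rightarrow> None)"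
| "eval D ap I (Lam x s) =
     (if typeof (Lam x s) \<noteq> None \<and>
         (\<exists>f\<in>D (tyof (Lam x s)). \<forall>a\<in>D (nty x). eval D ap (I(x := a)) s = Some (ap f a))
      then Some (THE f. f \<in> D (tyof (Lam x s)) \<and>
                       (\<forall>a\<in>D (nty x). eval D ap (I(x := a)) s = Some (ap f a)))
      else None)"

definition is_interp :: "(ty \<Rightarrow> 'u set) \<Rightarrow> ('u \<Rightarrow> 'u \<Rightarrow> 'u) \<Rightarrow> (name \<Rightarrow> 'u) \<Rightarrow> bool" where
  "is_interp D ap I \<longleftrightarrow> assignment D ap I \<and> (\<forall>t. is_term t \<longrightarrow> eval D ap I t \<noteq> None)"

text \<open>tt and ff play the roles of 1 and 0.\<close>
definition logical :: "(ty \<Rightarrow> 'u set) \<Rightarrow> ('u \<Rightarrow> 'u \<Rightarrow> 'u) \<Rightarrow> (name \<Rightarrow> 'u) \<Rightarrow> 'u \<Rightarrow> 'u \<Rightarrow> bool" where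
  "logical D ap I tt ff \<longleftrightarrow> is_interp D ap I \<and> tt \<noteq> ff \<and> D tyo = {tt, ff} \<and>
     (\<forall>a\<in>D tyo. ap (I NegC) a = (if a = tt then ff else tt)) \<and>
     (\<forall>a\<in>D tyo. \<forall>b\<in>D tyo. ap (ap (I ImpC) a) b = (if a = tt \<and> b = ff then ff else tt)) \<and>
     (\<forall>\<sigma>. \<forall>a\<in>D \<sigma>. \<forall>b\<in>D \<sigma>. ap (ap (I (EqC \<sigma>)) a) b = (if a = b then tt else ff)) \<and>
     (\<forall>n. \<forall>f\<in>D (Fn (Base (Suc n)) tyo).
         ap (I (AllC n)) f = tt \<longleftrightarrow> (\<forall>a\<in>D (Base (Suc n)). ap f a = tt))"

definition satisfiable :: "'u itself \<Rightarrow> tm set \<Rightarrow> bool" where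
  "satisfiable _ A \<longleftrightarrow>
     (\<exists>D ap (I :: name \<Rightarrow> 'u) tt ff. logical D ap I tt ff \<and> (\<forall>s\<in>A. eval D ap I s = Some tt))"

definition normalization :: "'u itself \<Rightarrow> (tm \<Rightarrow> tm) \<Rightarrow> bool" where
  "normalization _ nf \<longleftrightarrow>
     (\<forall>s. is_term s \<longrightarrow> typeof (nf s) = typeof s) \<and>
     (\<forall>s. is_term s \<longrightarrow> nf (nf s) = nf s) \<and>
     (\<forall>s t. is_term (App s t) \<longrightarrow> nf (App (nf s) t) = nf (App s t)) \<and>
     (\<forall>y ss. is_term (apps (Nm y) ss) \<and> (\<exists>n. typeof (apps (Nm y) ss) = Some (Base n)) \<longrightarrow>
         nf (apps (Nm y) ss) = apps (Nm y) (map nf ss)) \<and>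
     (\<forall>D ap (I :: name \<Rightarrow> 'u) s. is_interp D ap I \<and> is_term s \<longrightarrow>
         eval D ap I (nf s) = eval D ap I s)"

definition EFO :: "tm \<Rightarrow> bool" where
  "EFO t \<longleftrightarrow> is_term t \<and>
     (\<forall>c\<in>names t. is_var c \<or> c = NegC \<or> c = ImpC \<or> (\<exists>\<alpha>. c = EqC \<alpha> \<and> is_sort \<alpha>) \<or> (\<exists>n. c = AllC n))"

definition quasi_EFO :: "tm \<Rightarrow> bool" where
  "quasi_EFO t \<longleftrightarrow> (EFO t \<and> typeof t = Some tyo) \<or>
     (\<exists>\<sigma> s u. t = neq \<sigma> s u \<and> EFO s \<and> EFO u \<and> typeof s = Some \<sigma> \<and> typeof u = Some \<sigma>)"

definition EFO_branch :: "(tm \<Rightarrow> tm) \<Rightarrow> tm set \<Rightarrow> bool" where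
  "EFO_branch nf A \<longleftrightarrow> (\<forall>s\<in>A. nf s = s \<and> quasi_EFO s)"

definition discriminating :: "ty \<Rightarrow> tm set \<Rightarrow> tm \<Rightarrow> bool" where
  "discriminating \<alpha> A u \<longleftrightarrow> (\<exists>t. neq \<alpha> u t \<in> A \<or> neq \<alpha> t u \<in> A)"

definition all_admissible :: "(tm \<Rightarrow> tm) \<Rightarrow> tm set \<Rightarrow> nat \<Rightarrow> tm \<Rightarrow> tm \<Rightarrow> bool" where
  "all_admissible nf A n s u \<longleftrightarrow>
     (let \<alpha> = Base (Suc n);
          disc = (\<exists>w. discriminating \<alpha> A w);
          inst = (\<exists>w. is_term w \<and> nf w = w \<and> typeof w = Some \<alpha> \<and> nf (App s w) \<in> A);
          fv = (\<exists>y. is_var y \<and> nty y = \<alpha> \<and> y \<in> free_set A)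
      in (disc \<longrightarrow> discriminating \<alpha> A u) \<and>
         (\<not> inst \<and> \<not> disc \<and> fv \<longrightarrow>
            (\<exists>y. u = Nm y \<and> is_var y \<and> nty y = \<alpha> \<and> y \<in> free_set A)) \<and>
         (\<not> inst \<and> \<not> disc \<and> \<not> fv \<longrightarrow> (\<exists>y. u = Nm y \<and> is_var y \<and> nty y = \<alpha>)))"

text \<open>rule_step nf A alts: A / (A \<union> B1) ... (A \<union> Bk) is an admitted rule instance,
  where alts = [B1, ..., Bk].\<close>
definition rule_step :: "(tm \<Rightarrow> tm) \<Rightarrow> tm set \<Rightarrow> tm set list \<Rightarrow> bool" where
  "rule_step nf A alts \<longleftrightarrow> finite A \<and> EFO_branch nf A \<and> (
     (\<exists>s. neg (neg s) \<in> A \<and> alts = [{s}])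
   \<or> (\<exists>s t. neq tyo s t \<in> A \<and> alts = [{s, neg t}, {neg s, t}])
   \<or> (\<exists>s t. imp s t \<in> A \<and> alts = [{neg s}, {t}])
   \<or> (\<exists>s t. neg (imp s t) \<in> A \<and> alts = [{s, neg t}])
   \<or> (\<exists>x ss ts. is_var x \<and> length ss = length ts \<and>
        apps (Nm x) ss \<in> A \<and> neg (apps (Nm x) ts) \<in> A \<and>
        alts = map (\<lambda>(s, t). {neq (tyof s) s t}) (zip ss ts))
   \<or> (\<exists>x ss ts \<alpha>. is_var x \<and> is_sort \<alpha> \<and> length ss = length ts \<and>
        neq \<alpha> (apps (Nm x) ss) (apps (Nm x) ts) \<in> A \<and>
        alts = map (\<lambda>(s, t). {neq (tyof s) s t}) (zip ss ts))
   \<or> (\<exists>s t \<sigma> \<tau> x. neq (Fn \<sigma> \<tau>) s t \<in> A \<and> is_var x \<and> nty x = \<sigma> \<and> x \<notin> free_set A \<and>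
        \<not> (\<exists>y. is_var y \<and> nty y = \<sigma> \<and> neq \<tau> (nf (App s (Nm y))) (nf (App t (Nm y))) \<in> A) \<and>
        alts = [{neq \<tau> (nf (App s (Nm x))) (nf (App t (Nm x)))}])
   \<or> (\<exists>s t u v \<alpha>. is_sort \<alpha> \<and> eq \<alpha> s t \<in> A \<and> neq \<alpha> u v \<in> A \<and>
        alts = [{neq \<alpha> s u, neq \<alpha> t u}, {neq \<alpha> s v, neq \<alpha> t v}])
   \<or> (\<exists>n s u. all n s \<in> A \<and> is_term u \<and> nf u = u \<and> EFO u \<and> typeof u = Some (Base (Suc n)) \<and>
        all_admissible nf A n s u \<and> alts = [{nf (App s u)}])
   \<or> (\<exists>n s x. neg (all n s) \<in> A \<and> is_var x \<and> nty x = Base (Suc n) \<and> x \<notin> free_set A \<and>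
        \<not> (\<exists>y. is_var y \<and> nty y = Base (Suc n) \<and> neg (nf (App s (Nm y))) \<in> A) \<and>
        alts = [{neg (nf (App s (Nm x)))}]))"

inductive refutable :: "(tm \<Rightarrow> tm) \<Rightarrow> tm set \<Rightarrow> bool" for nf where
  "rule_step nf A alts \<Longrightarrow> (\<forall>B. B \<in> set alts \<longrightarrow> refutable nf (A \<union> B)) \<Longrightarrow> refutable nf A"

end

theory Submission
  imports Defs
begin

text \<open>Every admitted rule instance is locally sound: if a logical interpretation makes the
  branch true, it also makes the formulas of some alternative true. For all rules except FE and
  AllN the same interpretation works; for FE and AllN it is updated at the fresh variable x to a
  value witnessing the disequality of the two functions, respectively the failure of the
  quantified predicate. This does not change the value of any formula of the branch, since x is
  not free in it.\<close>

lemma typeof_App_Some: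
  "typeof (App s t) = Some \<tau> \<longleftrightarrow> (\<exists>\<sigma>. typeof s = Some (Fn \<sigma> \<tau>) \<and> typeof t = Some \<sigma>)"
  by (auto split: option.splits ty.splits)

lemma typeof_neg [simp]: "typeof (neg s) = Some \<tau> \<longleftrightarrow> \<tau> = tyo \<and> typeof s = Some tyo"
  by (auto simp: neg_def typeof_App_Some)

lemma typeof_imp [simp]:
  "typeof (imp s t) = Some \<tau> \<longleftrightarrow> \<tau> = tyo \<and> typeof s = Some tyo \<and> typeof t = Some tyo"
  by (auto simp: imp_def typeof_App_Some)

lemma typeof_eq [simp]:
  "typeof (eq \<sigma> s t) = Some \<tau> \<longleftrightarrow> \<tau> = tyo \<and> typeof s = Some \<sigma> \<and> typeof t = Some \<sigma>"
  by (auto simp: eq_def typeof_App_Some)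

lemma typeof_neq [simp]:
  "typeof (neq \<sigma> s t) = Some \<tau> \<longleftrightarrow> \<tau> = tyo \<and> typeof s = Some \<sigma> \<and> typeof t = Some \<sigma>"
  by (auto simp: neq_def)

lemma typeof_all [simp]:
  "typeof (all n s) = Some \<tau> \<longleftrightarrow> \<tau> = tyo \<and> typeof s = Some (Fn (Base (Suc n)) tyo)"
  by (auto simp: all_def typeof_App_Some)

lemma typeof_quasi_EFO: "quasi_EFO s \<Longrightarrow> typeof s = Some tyo"
  by (auto simp: quasi_EFO_def)

lemma apps_Cons: "apps h (s # ss) = apps (App h s) ss"
  by (simp add: apps_def)

lemma typeof_apps_head: "typeof (apps h ss) \<noteq> None \<Longrightarrow> typeof h \<noteq> None"
proof (induction ss arbitrary: h)
  case (Cons s ss)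
  then have "typeof (App h s) \<noteq> None"
    by (metis apps_Cons)
  then show ?case
    by (auto split: option.splits ty.splits)
qed (simp add: apps_def)

lemma typeof_apps_args:
  assumes "length ss = length ts" and "typeof (apps h ss) \<noteq> None" and "typeof (apps h' ts) \<noteq> None"
    and "typeof h = typeof h'"
  shows "list_all2 (\<lambda>s t. typeof s \<noteq> None \<and> typeof s = typeof t) ss ts"
  using assms
proof (induction ss ts arbitrary: h h' rule: list_induct2)
  case Nil
  then show ?case by simp
next
  case (Cons s ss t ts)
  have "typeof (App h s) \<noteq> None" "typeof (App h' t) \<noteq> None"
    using Cons.prems(1,2) typeof_apps_head by (metis apps_Cons)+
  then obtain \<sigma> \<tau> where "typeof h = Some (Fn \<sigma> \<tau>)" "typeof s = Some \<sigma>" "typeof t = Some \<sigma>"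
    using Cons.prems(3) by (auto split: option.splits ty.splits if_splits)
  moreover from this have "typeof (App h s) = typeof (App h' t)"
    using Cons.prems(3) by simp
  ultimately show ?case
    using Cons.IH Cons.prems(1,2) by (simp add: apps_Cons)
qed

lemma eval_apps_cong:
  assumes "eval D ap I h = eval D ap I h'"
    and "list_all2 (\<lambda>s t. eval D ap I s = eval D ap I t) ss ts"
  shows "eval D ap I (apps h ss) = eval D ap I (apps h' ts)"
  using assms(2,1)
  by (induction ss ts arbitrary: h h' rule: list_all2_induct) (simp_all add: apps_Cons apps_def)

lemma eval_apps_differ_arg:
  assumes "eval D ap I (apps h ss) \<noteq> eval D ap I (apps h ts)" and "length ss = length ts"
  shows "\<exists>(s, t)\<in>set (zip ss ts). eval D ap I s \<noteq> eval D ap I t"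
  using eval_apps_cong[of D ap I h h ss ts] assms by (auto simp: list_all2_iff)

lemma eval_in_domain:
  assumes "assignment D ap I" and "typeof t = Some \<sigma>" and "eval D ap I t = Some v"
  shows "v \<in> D \<sigma>"
  using assms(2,3)
proof (induction t arbitrary: \<sigma> v)
  case (Nm x)
  then show ?case using assms(1) by (auto simp: assignment_def)
next
  case (App s t)
  from App.prems(1) obtain \<rho> where "typeof s = Some (Fn \<rho> \<sigma>)" "typeof t = Some \<rho>"
    using typeof_App_Some by blast
  moreover from App.prems(2) obtain f a where
    "eval D ap I s = Some f" "eval D ap I t = Some a" "v = ap f a"
    by (auto split: option.splits)
  ultimately have "f \<in> D (Fn \<rho> \<sigma>)" "a \<in> D \<rho>" "v = ap f a"
    using App.IH by blast+
  then show ?case using assms(1) by (auto simp: assignment_def frame_def)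
next
  case (Lam x s)
  let ?P = "\<lambda>f. f \<in> D \<sigma> \<and> (\<forall>a\<in>D (nty x). eval D ap (I(x := a)) s = Some (ap f a))"
  obtain \<tau> where \<sigma>: "\<sigma> = Fn (nty x) \<tau>"
    using Lam.prems(1) by auto
  have "tyof (Lam x s) = \<sigma>"
    using Lam.prems(1) unfolding tyof_def by (simp del: typeof.simps)
  with Lam.prems(2) have "\<exists>f. ?P f" and v: "v = (THE f. ?P f)"
    by (simp_all split: if_split_asm) blast
  moreover have "f = g" if "?P f" "?P g" for f g
  proof -
    have "\<forall>a\<in>D (nty x). ap f a = ap g a"
      using that by auto
    then show ?thesis
      using that assms(1) \<sigma> unfolding assignment_def frame_def by blast
  qed
  ultimately have "?P v"
    using theI[of ?P] by blast
  then show ?case by blast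
qed

lemma eval_cong_free: "(\<forall>y\<in>free t. I y = J y) \<Longrightarrow> eval D ap I t = eval D ap J t"
proof (induction t arbitrary: I J)
  case (Nm x) then show ?case by simp
next
  case (App s t)
  have "eval D ap I s = eval D ap J s" "eval D ap I t = eval D ap J t" using App by auto
  then show ?case by simp
next
  case (Lam x s)
  have "\<forall>a. eval D ap (I(x := a)) s = eval D ap (J(x := a)) s"
    using Lam by (intro allI Lam.IH) auto
  then show ?case by simp
qed

lemma eval_fun_upd_fresh: "x \<notin> free t \<Longrightarrow> eval D ap (I(x := a)) t = eval D ap I t"
  by (rule eval_cong_free) auto

lemma is_interp_fun_upd:
  assumes "is_interp D ap I" and "a \<in> D (nty x)"
  shows "is_interp D ap (I(x := a))"
  unfolding is_interp_def
proof (intro conjI allI impI)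
  show "assignment D ap (I(x := a))"
    using assms by (auto simp: is_interp_def assignment_def)
next
  fix t assume "is_term t"
  then have "is_term (Lam x t)"
    by (auto simp: is_term_def)
  then have "eval D ap I (Lam x t) \<noteq> None"
    using assms(1) unfolding is_interp_def by blast
  then show "eval D ap (I(x := a)) t \<noteq> None"
    using assms(2) by (auto split: if_splits)
qed

lemma logical_fun_upd:
  assumes "logical D ap I tt ff" and "is_var x" and "a \<in> D (nty x)"
  shows "logical D ap (I(x := a)) tt ff"
proof -
  have "is_interp D ap (I(x := a))"
    using assms(1,3) is_interp_fun_upd by (auto simp: logical_def)
  moreover obtain n \<sigma> where "x = Var n \<sigma>"
    using assms(2) by (cases x) auto
  ultimately show ?thesis
    using assms(1) by (auto simp: logical_def)
qed

lemma typeof_nf: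
  "normalization TYPE('u) nf \<Longrightarrow> is_term s \<Longrightarrow> typeof (nf s) = typeof s"
  unfolding normalization_def by blast

lemma eval_nf:
  "normalization TYPE('u) nf \<Longrightarrow> is_interp D ap (I :: name \<Rightarrow> 'u) \<Longrightarrow> is_term s \<Longrightarrow>
   eval D ap I (nf s) = eval D ap I s"
  unfolding normalization_def by blast

definition models :: "(ty \<Rightarrow> 'u set) \<Rightarrow> ('u \<Rightarrow> 'u \<Rightarrow> 'u) \<Rightarrow> (name \<Rightarrow> 'u) \<Rightarrow> 'u \<Rightarrow> 'u \<Rightarrow> tm set \<Rightarrow> bool"
  where "models D ap I tt ff A \<longleftrightarrow> logical D ap I tt ff \<and> (\<forall>s\<in>A. eval D ap I s = Some tt)"

lemma models_fun_upd_fresh: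
  assumes "models D ap I tt ff A" and "is_var x" and "x \<notin> free_set A" and "a \<in> D (nty x)"
  shows "models D ap (I(x := a)) tt ff A"
proof -
  have "eval D ap (I(x := a)) s = eval D ap I s" if "s \<in> A" for s
    using that assms(3) by (intro eval_fun_upd_fresh) (auto simp: free_set_def)
  then show ?thesis
    using assms(1,2,4) unfolding models_def by (simp add: logical_fun_upd)
qed

locale logical_interpretation =
  fixes D :: "ty \<Rightarrow> 'u set" and ap :: "'u \<Rightarrow> 'u \<Rightarrow> 'u" and I :: "name \<Rightarrow> 'u" and tt ff :: 'u
  assumes logical: "logical D ap I tt ff"
begin

abbreviation holds :: "tm \<Rightarrow> bool" where "holds s \<equiv> eval D ap I s = Some tt"

lemma is_interp: "is_interp D ap I"
  using logical by (simp add: logical_def)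

lemma frame: "frame D ap"
  using is_interp by (simp add: is_interp_def assignment_def)

lemma eval_typed:
  assumes "typeof s = Some \<sigma>"
  shows "\<exists>v. eval D ap I s = Some v \<and> v \<in> D \<sigma>"
proof -
  have "is_term s"
    using assms by (simp add: is_term_def)
  then obtain v where v: "eval D ap I s = Some v"
    using is_interp by (auto simp: is_interp_def)
  moreover have "v \<in> D \<sigma>"
    using eval_in_domain[OF _ assms v] is_interp by (simp add: is_interp_def)
  ultimately show ?thesis
    by simp
qed

lemma domain_o: "D tyo = {tt, ff}" and tt_neq_ff: "tt \<noteq> ff"
  and ap_NegC: "a \<in> D tyo \<Longrightarrow> ap (I NegC) a = (if a = tt then ff else tt)"
  and ap_ImpC: "a \<in> D tyo \<Longrightarrow> b \<in> D tyo \<Longrightarrow>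
    ap (ap (I ImpC) a) b = (if a = tt \<and> b = ff then ff else tt)"
  and ap_EqC: "a \<in> D \<sigma> \<Longrightarrow> b \<in> D \<sigma> \<Longrightarrow> ap (ap (I (EqC \<sigma>)) a) b = (if a = b then tt else ff)"
  and ap_AllC: "f \<in> D (Fn (Base (Suc n)) tyo) \<Longrightarrow>
    ap (I (AllC n)) f = tt \<longleftrightarrow> (\<forall>a\<in>D (Base (Suc n)). ap f a = tt)"
  using logical by (simp_all add: logical_def)

lemma eval_formula: "typeof s = Some tyo \<Longrightarrow> eval D ap I s = Some tt \<or> eval D ap I s = Some ff"
  using eval_typed[of s] domain_o by auto

lemma holds_neg: "typeof s = Some tyo \<Longrightarrow> holds (neg s) \<longleftrightarrow> \<not> holds s"
  using eval_typed[of s] tt_neq_ff by (auto simp: neg_def ap_NegC)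

lemma holds_imp:
  "typeof s = Some tyo \<Longrightarrow> typeof t = Some tyo \<Longrightarrow> holds (imp s t) \<longleftrightarrow> (holds s \<longrightarrow> holds t)"
  using eval_typed[of s] eval_typed[of t] tt_neq_ff domain_o by (auto simp: imp_def ap_ImpC)

lemma holds_eq:
  "typeof s = Some \<sigma> \<Longrightarrow> typeof t = Some \<sigma> \<Longrightarrow>
   holds (eq \<sigma> s t) \<longleftrightarrow> eval D ap I s = eval D ap I t"
  using eval_typed[of s] eval_typed[of t] tt_neq_ff by (auto simp: eq_def ap_EqC split: if_splits)

lemma holds_neq:
  "typeof s = Some \<sigma> \<Longrightarrow> typeof t = Some \<sigma> \<Longrightarrow>
   holds (neq \<sigma> s t) \<longleftrightarrow> eval D ap I s \<noteq> eval D ap I t"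
  by (simp add: neq_def holds_neg holds_eq)

lemma holds_all:
  "typeof s = Some (Fn (Base (Suc n)) tyo) \<Longrightarrow> eval D ap I s = Some f \<Longrightarrow>
   holds (all n s) \<longleftrightarrow> (\<forall>a\<in>D (Base (Suc n)). ap f a = tt)"
  using eval_typed[of s] by (auto simp: all_def ap_AllC)

lemma holds_neq_o_cases:
  assumes "typeof s = Some tyo" and "typeof t = Some tyo" and "holds (neq tyo s t)"
  shows "holds s \<and> holds (neg t) \<or> holds (neg s) \<and> holds t"
  using assms eval_formula[of s] eval_formula[of t] by (auto simp: holds_neq holds_neg)

lemma holds_confrontation:
  assumes "typeof s = Some \<alpha>" "typeof t = Some \<alpha>" "typeof u = Some \<alpha>" "typeof v = Some \<alpha>"
    and "holds (eq \<alpha> s t)" and "holds (neq \<alpha> u v)"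
  shows "holds (neq \<alpha> s u) \<and> holds (neq \<alpha> t u) \<or> holds (neq \<alpha> s v) \<and> holds (neq \<alpha> t v)"
  using assms by (auto simp: holds_eq holds_neq)

lemma holds_neq_differing_arg:
  assumes "typeof (apps (Nm x) ss) \<noteq> None" and "typeof (apps (Nm x) ts) \<noteq> None"
    and "length ss = length ts" and "eval D ap I (apps (Nm x) ss) \<noteq> eval D ap I (apps (Nm x) ts)"
  shows "\<exists>B\<in>set (map (\<lambda>(s, t). {neq (tyof s) s t}) (zip ss ts)). \<forall>u\<in>B. holds u"
proof -
  obtain s t where st: "(s, t) \<in> set (zip ss ts)" and "eval D ap I s \<noteq> eval D ap I t"
    using eval_apps_differ_arg assms(3,4) by blast
  moreover have "typeof s \<noteq> None \<and> typeof s = typeof t"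
    using typeof_apps_args[OF assms(3,1,2) refl] st by (force simp: list_all2_iff)
  then obtain \<sigma> where "typeof s = Some \<sigma>" "typeof t = Some \<sigma>"
    by (metis option.exhaust)
  ultimately have "holds (neq (tyof s) s t)"
    by (simp add: holds_neq tyof_def)
  with st show ?thesis by force
qed

lemma holds_all_instance:
  assumes N: "normalization TYPE('u) nf" and "typeof s = Some (Fn (Base (Suc n)) tyo)"
    and "holds (all n s)" and "typeof u = Some (Base (Suc n))"
  shows "holds (nf (App s u))"
proof -
  obtain f b where "eval D ap I s = Some f" "eval D ap I u = Some b" "b \<in> D (Base (Suc n))"
    using assms(2,4) by (metis eval_typed)
  moreover have "is_term (App s u)"
    using assms(2,4) by (auto simp: is_term_def typeof_App_Some)
  ultimately show ?thesis
    using assms(2,3) eval_nf[OF N is_interp] holds_all by simp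
qed

lemma neq_fun_witness:
  assumes N: "normalization TYPE('u) nf"
    and st: "typeof s = Some (Fn \<sigma> \<tau>)" "typeof t = Some (Fn \<sigma> \<tau>)" "holds (neq (Fn \<sigma> \<tau>) s t)"
    and x: "is_var x" "nty x = \<sigma>" "x \<notin> free s" "x \<notin> free t"
  shows "\<exists>a\<in>D \<sigma>. eval D ap (I(x := a)) (neq \<tau> (nf (App s (Nm x))) (nf (App t (Nm x)))) = Some tt"
proof -
  obtain f g where fg: "eval D ap I s = Some f" "eval D ap I t = Some g"
    and "f \<in> D (Fn \<sigma> \<tau>)" "g \<in> D (Fn \<sigma> \<tau>)"
    using st(1,2) by (metis eval_typed)
  moreover have "f \<noteq> g"
    using st fg holds_neq by auto
  ultimately obtain a where a: "a \<in> D \<sigma>" "ap f a \<noteq> ap g a"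
    using frame unfolding frame_def by blast
  interpret J: logical_interpretation D ap "I(x := a)" tt ff
    using logical_fun_upd[OF logical x(1)] a(1) x(2) by unfold_locales simp
  have "typeof (nf (App s (Nm x))) = Some \<tau>" "typeof (nf (App t (Nm x))) = Some \<tau>"
    and "eval D ap (I(x := a)) (nf (App s (Nm x))) = Some (ap f a)"
    "eval D ap (I(x := a)) (nf (App t (Nm x))) = Some (ap g a)"
    using st x fg by (simp_all add: is_term_def typeof_nf[OF N] eval_nf[OF N J.is_interp]
        eval_fun_upd_fresh)
  with a show ?thesis
    by (intro bexI[OF _ a(1)]) (simp add: J.holds_neq)
qed

lemma not_all_witness:
  assumes N: "normalization TYPE('u) nf"
    and s: "typeof s = Some (Fn (Base (Suc n)) tyo)" "holds (neg (all n s))"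
    and x: "is_var x" "nty x = Base (Suc n)" "x \<notin> free s"
  shows "\<exists>a\<in>D (Base (Suc n)). eval D ap (I(x := a)) (neg (nf (App s (Nm x)))) = Some tt"
proof -
  obtain f where f: "eval D ap I s = Some f" "f \<in> D (Fn (Base (Suc n)) tyo)"
    using s(1) by (metis eval_typed)
  with s have "\<not> (\<forall>a\<in>D (Base (Suc n)). ap f a = tt)"
    using holds_neg holds_all by simp
  then obtain a where a: "a \<in> D (Base (Suc n))" "ap f a \<noteq> tt"
    by blast
  interpret J: logical_interpretation D ap "I(x := a)" tt ff
    using logical_fun_upd[OF logical x(1)] a(1) x(2) by unfold_locales simp
  have "typeof (nf (App s (Nm x))) = Some tyo"
    and "eval D ap (I(x := a)) (nf (App s (Nm x))) = Some (ap f a)"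
    using s(1) x f(1) by (simp_all add: is_term_def typeof_nf[OF N] eval_nf[OF N J.is_interp]
        eval_fun_upd_fresh)
  with a show ?thesis
    by (intro bexI[OF _ a(1)]) (simp add: J.holds_neg)
qed

end

locale branch_model = logical_interpretation D ap I tt ff
  for D :: "ty \<Rightarrow> 'u set" and ap I tt ff +
  fixes nf :: "tm \<Rightarrow> tm" and A :: "tm set"
  assumes normalization: "normalization TYPE('u) nf"
    and EFO_branch: "EFO_branch nf A"
    and holds_branch: "s \<in> A \<Longrightarrow> holds s"
begin

lemma typeof_branch: "s \<in> A \<Longrightarrow> typeof s = Some tyo"
  using EFO_branch typeof_quasi_EFO by (auto simp: EFO_branch_def)

abbreviation satisfiable_alternative :: "tm set list \<Rightarrow> bool" where
  "satisfiable_alternative alts \<equiv> \<exists>B\<in>set alts. \<exists>J. models D ap J tt ff (A \<union> B)"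

lemma alternative_holds:
  "\<exists>B\<in>set alts. \<forall>u\<in>B. holds u \<Longrightarrow> satisfiable_alternative alts"
  using logical holds_branch unfolding models_def by blast

lemma alternative_holds_fun_upd:
  assumes "B \<in> set alts" and "is_var x" and "x \<notin> free_set A" and "a \<in> D (nty x)"
    and "\<forall>u\<in>B. eval D ap (I(x := a)) u = Some tt"
  shows "satisfiable_alternative alts"
proof -
  have "models D ap I tt ff A"
    using logical holds_branch unfolding models_def by blast
  then have "models D ap (I(x := a)) tt ff A"
    using assms(2-4) by (rule models_fun_upd_fresh)
  with assms(1,5) show ?thesis
    unfolding models_def by blast
qed

lemma double_neg_sound: "neg (neg s) \<in> A \<Longrightarrow> satisfiable_alternative [{s}]"
  using holds_branch typeof_branch by (intro alternative_holds) (force simp: holds_neg)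

lemma bool_neq_sound:
  assumes "neq tyo s t \<in> A"
  shows "satisfiable_alternative [{s, neg t}, {neg s, t}]"
  using holds_neq_o_cases[OF _ _ holds_branch[OF assms]] typeof_branch[OF assms]
  by (intro alternative_holds) auto

lemma imp_sound:
  assumes "imp s t \<in> A"
  shows "satisfiable_alternative [{neg s}, {t}]"
  using holds_branch[OF assms] typeof_branch[OF assms]
  by (intro alternative_holds) (auto simp: holds_imp holds_neg)

lemma neg_imp_sound:
  assumes "neg (imp s t) \<in> A"
  shows "satisfiable_alternative [{s, neg t}]"
  using holds_branch[OF assms] typeof_branch[OF assms]
  by (intro alternative_holds) (auto simp: holds_imp holds_neg)

lemma mat_sound:
  assumes "apps (Nm x) ss \<in> A" and "neg (apps (Nm x) ts) \<in> A" and "length ss = length ts"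
  shows "satisfiable_alternative (map (\<lambda>(s, t). {neq (tyof s) s t}) (zip ss ts))"
proof (rule alternative_holds, rule holds_neq_differing_arg)
  show "eval D ap I (apps (Nm x) ss) \<noteq> eval D ap I (apps (Nm x) ts)"
    using holds_branch[OF assms(1)] holds_branch[OF assms(2)] typeof_branch[OF assms(2)]
    by (auto simp: holds_neg)
qed (use typeof_branch[OF assms(1)] typeof_branch[OF assms(2)] assms(3) in auto)

lemma dec_sound:
  assumes "neq \<alpha> (apps (Nm x) ss) (apps (Nm x) ts) \<in> A" and "length ss = length ts"
  shows "satisfiable_alternative (map (\<lambda>(s, t). {neq (tyof s) s t}) (zip ss ts))"
  using holds_branch[OF assms(1)] typeof_branch[OF assms(1)] assms(2)
  by (intro alternative_holds holds_neq_differing_arg) (auto simp: holds_neq)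

lemma fe_sound:
  assumes m: "neq (Fn \<sigma> \<tau>) s t \<in> A" and x: "is_var x" "nty x = \<sigma>" "x \<notin> free_set A"
  shows "satisfiable_alternative [{neq \<tau> (nf (App s (Nm x))) (nf (App t (Nm x)))}]"
proof -
  have "x \<notin> free s" "x \<notin> free t"
    using m x(3) by (auto simp: free_set_def neq_def neg_def eq_def)
  then obtain a where "a \<in> D (nty x)"
    and "eval D ap (I(x := a)) (neq \<tau> (nf (App s (Nm x))) (nf (App t (Nm x)))) = Some tt"
    using neq_fun_witness[OF normalization _ _ holds_branch[OF m] x(1,2)] typeof_branch[OF m] x(2)
    by auto
  with x(1,3) show ?thesis
    by (intro alternative_holds_fun_upd[where x = x and a = a]) auto
qed

lemma con_sound:
  assumes "eq \<alpha> s t \<in> A" and "neq \<alpha> u v \<in> A"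
  shows "satisfiable_alternative [{neq \<alpha> s u, neq \<alpha> t u}, {neq \<alpha> s v, neq \<alpha> t v}]"
  using holds_confrontation[OF _ _ _ _ holds_branch[OF assms(1)] holds_branch[OF assms(2)]]
    typeof_branch[OF assms(1)] typeof_branch[OF assms(2)]
  by (intro alternative_holds) auto

lemma all_sound:
  assumes "all n s \<in> A" and "typeof u = Some (Base (Suc n))"
  shows "satisfiable_alternative [{nf (App s u)}]"
  using holds_all_instance[OF normalization _ holds_branch[OF assms(1)] assms(2)]
    typeof_branch[OF assms(1)]
  by (intro alternative_holds) auto

lemma alln_sound:
  assumes m: "neg (all n s) \<in> A" and x: "is_var x" "nty x = Base (Suc n)" "x \<notin> free_set A"
  shows "satisfiable_alternative [{neg (nf (App s (Nm x)))}]"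
proof -
  have "x \<notin> free s"
    using m x(3) by (auto simp: free_set_def neg_def all_def)
  then obtain a where "a \<in> D (nty x)"
    and "eval D ap (I(x := a)) (neg (nf (App s (Nm x)))) = Some tt"
    using not_all_witness[OF normalization _ holds_branch[OF m] x(1,2)] typeof_branch[OF m] x(2)
    by auto
  with x(1,3) show ?thesis
    by (intro alternative_holds_fun_upd[where x = x and a = a]) auto
qed

text \<open>The restrictions on FE, AllN and All matter only for completeness; soundness ignores them.\<close>

lemma rule_step_sound: "rule_step nf A alts \<Longrightarrow> satisfiable_alternative alts"
  unfolding rule_step_def
proof (elim conjE disjE exE)
  fix s assume "neg (neg s) \<in> A" "alts = [{s}]"
  then show ?thesis by (simp only: double_neg_sound)
next
  fix s t assume "neq tyo s t \<in> A" "alts = [{s, neg t}, {neg s, t}]"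
  then show ?thesis by (simp only: bool_neq_sound)
next
  fix s t assume "imp s t \<in> A" "alts = [{neg s}, {t}]"
  then show ?thesis by (simp only: imp_sound)
next
  fix s t assume "neg (imp s t) \<in> A" "alts = [{s, neg t}]"
  then show ?thesis by (simp only: neg_imp_sound)
next
  fix x ss ts assume "apps (Nm x) ss \<in> A" "neg (apps (Nm x) ts) \<in> A" "length ss = length ts"
    "alts = map (\<lambda>(s, t). {neq (tyof s) s t}) (zip ss ts)"
  then show ?thesis by (simp only: mat_sound)
next
  fix x ss ts \<alpha> assume "neq \<alpha> (apps (Nm x) ss) (apps (Nm x) ts) \<in> A" "length ss = length ts"
    "alts = map (\<lambda>(s, t). {neq (tyof s) s t}) (zip ss ts)"
  then show ?thesis by (simp only: dec_sound)
next
  fix s t \<sigma> \<tau> x assume "neq (Fn \<sigma> \<tau>) s t \<in> A" "is_var x" "nty x = \<sigma>" "x \<notin> free_set A"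
    "alts = [{neq \<tau> (nf (App s (Nm x))) (nf (App t (Nm x)))}]"
  then show ?thesis using fe_sound by blast
next
  fix s t u v \<alpha> assume "eq \<alpha> s t \<in> A" "neq \<alpha> u v \<in> A"
    "alts = [{neq \<alpha> s u, neq \<alpha> t u}, {neq \<alpha> s v, neq \<alpha> t v}]"
  then show ?thesis by (simp only: con_sound)
next
  fix n s u assume "all n s \<in> A" "typeof u = Some (Base (Suc n))" "alts = [{nf (App s u)}]"
  then show ?thesis by (simp only: all_sound)
next
  fix n s x assume "neg (all n s) \<in> A" "is_var x" "nty x = Base (Suc n)" "x \<notin> free_set A"
    "alts = [{neg (nf (App s (Nm x)))}]"
  then show ?thesis using alln_sound by blast
qed

end

lemma refutable_not_models:
  assumes "normalization TYPE('u) nf"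
  shows "refutable nf A \<Longrightarrow> \<not> models D ap (I :: name \<Rightarrow> 'u) tt ff A"
proof (induction arbitrary: I rule: refutable.induct)
  case (1 A alts)
  show ?case
  proof
    assume "models D ap I tt ff A"
    then interpret branch_model D ap I tt ff nf A
      using assms \<open>rule_step nf A alts\<close> by unfold_locales (auto simp: models_def rule_step_def)
    show False
      using rule_step_sound[OF \<open>rule_step nf A alts\<close>] 1(2) by blast
  qed
qed

theorem proposition14p1:
  fixes nf :: "tm \<Rightarrow> tm" and A :: "tm set"
  assumes "normalization TYPE('u) nf"
    and "refutable nf A"
  shows "\<not> satisfiable TYPE('u) A"
  using refutable_not_models[OF assms] unfolding satisfiable_def models_def by blast

end
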